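(* Let $m\ge 4$ and $n\ge 5$ be integers with $n$ odd. On an $m\times n$ board with White king on $(m,1)$, White rook on $(1,1)$, Black king on $(m,n)$, and White to move, White can force checkmate within $n$ moves.
   Context: The board is the set of squares $(x,y)$ with $1\le x\le m$ (column) and $1\le y\le n$ (row). The pieces move and capture as in ordinary chess, restricted to this rectangular board: a king moves to any of the up to eight adjacent squares, and a rook moves any number of squares along its row or column without passing through another piece. The usual legality rules apply: a king may not move to a square attacked by an enemy piece, and the kings may never be adjacent. Black is checkmated if the Black king is attacked and Black has no legal move. "White can force checkmate within $k$ moves" means White has a strategy such that, against every sequence of legal Black replies, Black is checkmated by one of White's first $k$ moves; the players alternate, White first. *)

theory Defs
  imports Main
begin

text \<open>Squares are pairs (x,y) of integers: x is the column (1..m), y the row (1..n).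
A position is (White king, White rook (None once captured), Black king).\<close>

type_synonym sq = "int \<times> int"
type_synonym pos = "sq \<times> sq option \<times> sq"

definition on_board :: "nat \<Rightarrow> nat \<Rightarrow> sq \<Rightarrow> bool" where
  "on_board m n s \<longleftrightarrow> 1 \<le> fst s \<and> fst s \<le> int m \<and> 1 \<le> snd s \<and> snd s \<le> int n"

definition adj :: "sq \<Rightarrow> sq \<Rightarrow> bool" where
  "adj a b \<longleftrightarrow> a \<noteq> b \<and> \<bar>fst a - fst b\<bar> \<le> 1 \<and> \<bar>snd a - snd b\<bar> \<le> 1"

definition strictly_between :: "sq \<Rightarrow> sq \<Rightarrow> sq \<Rightarrow> bool" where
  "strictly_between a b c \<longleftrightarrow>
     (fst a = fst b \<and> fst c = fst a \<and> min (snd a) (snd b) < snd c \<and> snd c < max (snd a) (snd b)) \<or>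
     (snd a = snd b \<and> snd c = snd a \<and> min (fst a) (fst b) < fst c \<and> fst c < max (fst a) (fst b))"

definition rook_attacks :: "sq \<Rightarrow> sq set \<Rightarrow> sq \<Rightarrow> bool" where
  "rook_attacks r B s \<longleftrightarrow> r \<noteq> s \<and> (fst r = fst s \<or> snd r = snd s) \<and>
     (\<forall>c\<in>B. \<not> strictly_between r s c)"

fun white_moves :: "nat \<Rightarrow> nat \<Rightarrow> pos \<Rightarrow> pos set" where
  "white_moves m n (wk, wr, bk) =
     {(k', wr, bk) | k'. on_board m n k' \<and> adj wk k' \<and> Some k' \<noteq> wr \<and> k' \<noteq> bk \<and> \<not> adj k' bk}
   \<union> {(wk, Some r', bk) | r r'. wr = Some r \<and> on_board m n r' \<and> rook_attacks r {wk, bk} r'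
        \<and> r' \<noteq> wk \<and> r' \<noteq> bk}"

fun in_check :: "pos \<Rightarrow> bool" where
  "in_check (wk, wr, bk) \<longleftrightarrow> (\<exists>r. wr = Some r \<and> rook_attacks r {wk} bk)"

text \<open>Legal Black king moves (possibly capturing the rook). The Black king itself
does not block the rook's line when it moves.\<close>
fun black_moves :: "nat \<Rightarrow> nat \<Rightarrow> pos \<Rightarrow> pos set" where
  "black_moves m n (wk, wr, bk) =
     {(wk, (if wr = Some s then None else wr), s) | s. on_board m n s \<and> adj bk s \<and> s \<noteq> wk
        \<and> \<not> adj s wk \<and> \<not> (\<exists>r. wr = Some r \<and> r \<noteq> s \<and> rook_attacks r {wk} s)}"

definition mated :: "nat \<Rightarrow> nat \<Rightarrow> pos \<Rightarrow> bool" where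
  "mated m n p \<longleftrightarrow> in_check p \<and> black_moves m n p = {}"

primrec forced_mate :: "nat \<Rightarrow> nat \<Rightarrow> nat \<Rightarrow> pos \<Rightarrow> bool" where
  "forced_mate m n 0 p = False"
| "forced_mate m n (Suc k) p =
     (\<exists>p'\<in>white_moves m n p. mated m n p' \<or>
        (black_moves m n p' \<noteq> {} \<and> (\<forall>p''\<in>black_moves m n p'. forced_mate m n k p'')))"

end

theory Submission
  imports Defs
begin

text \<open>White's first move, rook to (m-1,1), confines the Black king to the last column and
forces it down to (m,n-1). The White king then walks up that column one square per move. The
vertical gap between the kings changes by 0 or -2 per full move and the kings may never touch, so,
n being odd, the gap stays odd and at least 3. Once the White king reaches (m,n-3), after n-4 king
moves, the Black king is in the corner (m,n), and mate follows in three: the king steps to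
(m-1,n-2), forcing Black to (m-1,n); the rook steps to (m-2,1), forcing Black back to (m,n); and
the rook mates on (m-2,n).\<close>

lemma forced_mate_SucI:
  assumes "p' \<in> white_moves m n p" and "black_moves m n p' \<noteq> {}"
    and "\<And>p''. p'' \<in> black_moves m n p' \<Longrightarrow> forced_mate m n k p''"
  shows "forced_mate m n (Suc k) p"
  using assms by auto

lemma forced_mate_Suc_mateI:
  "p' \<in> white_moves m n p \<Longrightarrow> mated m n p' \<Longrightarrow> forced_mate m n (Suc k) p"
  by auto

lemma king_move_in_white_moves:
  "on_board m n k' \<Longrightarrow> adj wk k' \<Longrightarrow> Some k' \<noteq> wr \<Longrightarrow> k' \<noteq> bk \<Longrightarrow> \<not> adj k' bk
    \<Longrightarrow> (k', wr, bk) \<in> white_moves m n (wk, wr, bk)"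
  unfolding white_moves.simps by (rule UnI1) blast

lemma rook_move_in_white_moves:
  "on_board m n r' \<Longrightarrow> rook_attacks r {wk, bk} r' \<Longrightarrow> r' \<noteq> wk \<Longrightarrow> r' \<noteq> bk
    \<Longrightarrow> (wk, Some r', bk) \<in> white_moves m n (wk, Some r, bk)"
  unfolding white_moves.simps by (rule UnI2) blast

lemma mem_black_moves:
  "p \<in> black_moves m n (wk, wr, bk) \<longleftrightarrow>
    (\<exists>s. p = (wk, (if wr = Some s then None else wr), s) \<and> on_board m n s \<and> adj bk s \<and> s \<noteq> wk
       \<and> \<not> adj s wk \<and> \<not> (\<exists>r. wr = Some r \<and> r \<noteq> s \<and> rook_attacks r {wk} s))"
  by auto

lemma king_move_in_black_moves:
  "on_board m n s \<Longrightarrow> adj bk s \<Longrightarrow> \<not> adj s wk \<Longrightarrow> s \<noteq> wk \<Longrightarrow> s \<noteq> r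
    \<Longrightarrow> \<not> rook_attacks r {wk} s \<Longrightarrow> (wk, Some r, s) \<in> black_moves m n (wk, Some r, bk)"
  unfolding black_moves.simps by (intro CollectI exI[of _ s]) auto

declare white_moves.simps [simp del] black_moves.simps [simp del] forced_mate.simps [simp del]

lemma rook_attacks_along_column:
  "fst r = fst s \<Longrightarrow> r \<noteq> s \<Longrightarrow> \<forall>c\<in>B. fst c \<noteq> fst r \<Longrightarrow> rook_attacks r B s"
  by (auto simp: rook_attacks_def strictly_between_def)

lemma rook_attacks_along_row:
  "snd r = snd s \<Longrightarrow> r \<noteq> s \<Longrightarrow> \<forall>c\<in>B. snd c \<noteq> snd r \<Longrightarrow> rook_attacks r B s"
  by (auto simp: rook_attacks_def strictly_between_def)

lemma black_moves_corner_approach: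
  assumes "2 \<le> m" and "4 \<le> n"
  shows "black_moves m n ((int m - 1, int n - 2), Some (int m - 1, 1), (int m, int n))
    = {((int m - 1, int n - 2), Some (int m - 1, 1), (int m - 1, int n))}"
    (is "black_moves m n (?wk, ?wr, ?bk) = _")
proof (intro equalityI subsetI)
  fix p assume "p \<in> black_moves m n (?wk, ?wr, ?bk)"
  then obtain x y where p: "p = (?wk, if ?wr = Some (x, y) then None else ?wr, (x, y))"
    and "on_board m n (x, y)" and "adj ?bk (x, y)" and "\<not> adj (x, y) ?wk"
    by (auto simp: mem_black_moves)
  then have "(x, y) = (int m - 1, int n)"
    by (auto simp: on_board_def adj_def)
  with p assms show "p \<in> {(?wk, ?wr, (int m - 1, int n))}" by simp
next
  fix p assume "p \<in> {(?wk, ?wr, (int m - 1, int n))}"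
  moreover have "strictly_between (int m - 1, 1) (int m - 1, int n) ?wk"
    using assms by (simp add: strictly_between_def)
  then have blocked: "\<not> rook_attacks (int m - 1, 1) {?wk} (int m - 1, int n)"
    by (simp add: rook_attacks_def)
  have "(?wk, ?wr, (int m - 1, int n)) \<in> black_moves m n (?wk, ?wr, ?bk)"
    by (rule king_move_in_black_moves) (use assms blocked in \<open>auto simp: on_board_def adj_def\<close>)
  ultimately show "p \<in> black_moves m n (?wk, ?wr, ?bk)" by simp
qed

lemma black_moves_corner_return:
  assumes "2 \<le> m" and "4 \<le> n"
  shows "black_moves m n ((int m - 1, int n - 2), Some (int m - 2, 1), (int m - 1, int n))
    = {((int m - 1, int n - 2), Some (int m - 2, 1), (int m, int n))}"
    (is "black_moves m n (?wk, ?wr, ?bk) = _")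
proof (intro equalityI subsetI)
  fix p assume "p \<in> black_moves m n (?wk, ?wr, ?bk)"
  then obtain x y where p: "p = (?wk, if ?wr = Some (x, y) then None else ?wr, (x, y))"
    and "on_board m n (x, y)" and "adj ?bk (x, y)" and "\<not> adj (x, y) ?wk"
    and unattacked: "\<not> (?wr \<noteq> Some (x, y) \<and> rook_attacks (int m - 2, 1) {?wk} (x, y))"
    by (auto simp: mem_black_moves)
  then have "y \<ge> int n - 1" and "x \<ge> int m - 2" by (auto simp: adj_def)
  moreover have "x \<noteq> int m - 2"
  proof
    assume "x = int m - 2"
    with \<open>y \<ge> int n - 1\<close> assms have "rook_attacks (int m - 2, 1) {?wk} (x, y)"
      by (intro rook_attacks_along_column) auto
    with unattacked \<open>y \<ge> int n - 1\<close> assms show False by auto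
  qed
  ultimately have "(x, y) = (int m, int n)"
    using \<open>on_board m n (x, y)\<close> \<open>adj ?bk (x, y)\<close> \<open>\<not> adj (x, y) ?wk\<close>
    by (auto simp: on_board_def adj_def)
  with p assms show "p \<in> {(?wk, ?wr, (int m, int n))}" by simp
next
  fix p assume "p \<in> {(?wk, ?wr, (int m, int n))}"
  moreover have "(?wk, ?wr, (int m, int n)) \<in> black_moves m n (?wk, ?wr, ?bk)"
    using assms by (intro king_move_in_black_moves) (auto simp: on_board_def adj_def rook_attacks_def)
  ultimately show "p \<in> black_moves m n (?wk, ?wr, ?bk)" by simp
qed

lemma mated_in_corner:
  assumes "4 \<le> n"
  shows "mated m n ((int m - 1, int n - 2), Some (int m - 2, int n), (int m, int n))"
    (is "mated m n (?wk, ?wr, ?bk)")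
proof -
  have "p \<notin> black_moves m n (?wk, ?wr, ?bk)" for p
  proof
    assume "p \<in> black_moves m n (?wk, ?wr, ?bk)"
    then obtain x y where "on_board m n (x, y)" and "adj ?bk (x, y)" and "\<not> adj (x, y) ?wk"
      and unattacked: "\<not> (?wr \<noteq> Some (x, y) \<and> rook_attacks (int m - 2, int n) {?wk} (x, y))"
      by (auto simp: mem_black_moves)
    then have "(x, y) = (int m - 1, int n)" by (auto simp: on_board_def adj_def)
    moreover have "rook_attacks (int m - 2, int n) {?wk} (int m - 1, int n)"
      by (rule rook_attacks_along_row) auto
    ultimately show False using unattacked by simp
  qed
  moreover have "rook_attacks (int m - 2, int n) {?wk} ?bk"
    by (rule rook_attacks_along_row) auto
  ultimately show ?thesis by (auto simp: mated_def)
qed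

abbreviation edge_pos :: "nat \<Rightarrow> int \<Rightarrow> int \<Rightarrow> pos" where
  "edge_pos m j b \<equiv> ((int m, j), Some (int m - 1, 1), (int m, b))"

lemma black_moves_edge_pos:
  assumes "1 \<le> m" and "1 \<le> j" and "j + 2 \<le> b" and "b \<le> int n"
  shows "black_moves m n (edge_pos m j b)
    = {edge_pos m j b' | b'. (b' = b - 1 \<or> b' = b + 1) \<and> j + 2 \<le> b' \<and> b' \<le> int n}"
proof (intro equalityI subsetI)
  fix p assume "p \<in> black_moves m n (edge_pos m j b)"
  then obtain x y where p: "p = ((int m, j), if (int m - 1, 1) = (x, y) then None
                                                else Some (int m - 1, 1), (x, y))"
    and "on_board m n (x, y)" and "adj (int m, b) (x, y)" and "\<not> adj (x, y) (int m, j)"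
    and unattacked: "\<not> ((int m - 1, 1) \<noteq> (x, y) \<and> rook_attacks (int m - 1, 1) {(int m, j)} (x, y))"
    by (auto simp: mem_black_moves)
  then have "y \<ge> b - 1" and "x \<ge> int m - 1" "x \<le> int m" by (auto simp: adj_def on_board_def)
  moreover have "x \<noteq> int m - 1"
  proof
    assume "x = int m - 1"
    with \<open>y \<ge> b - 1\<close> assms have "rook_attacks (int m - 1, 1) {(int m, j)} (x, y)"
      by (intro rook_attacks_along_column) auto
    with unattacked \<open>y \<ge> b - 1\<close> assms show False by auto
  qed
  ultimately have "x = int m" and "(y = b - 1 \<or> y = b + 1) \<and> j + 2 \<le> y \<and> y \<le> int n"
    using \<open>on_board m n (x, y)\<close> \<open>adj (int m, b) (x, y)\<close> \<open>\<not> adj (x, y) (int m, j)\<close> assms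
    by (auto simp: on_board_def adj_def)
  moreover from p \<open>x = int m\<close> have "p = edge_pos m j y" by simp
  ultimately show "p \<in> {edge_pos m j b' | b'. (b' = b - 1 \<or> b' = b + 1) \<and> j + 2 \<le> b' \<and> b' \<le> int n}"
    by blast
next
  fix p assume "p \<in> {edge_pos m j b' | b'. (b' = b - 1 \<or> b' = b + 1) \<and> j + 2 \<le> b' \<and> b' \<le> int n}"
  then obtain b' where "p = edge_pos m j b'" and "b' = b - 1 \<or> b' = b + 1" and "j + 2 \<le> b'" "b' \<le> int n"
    by blast
  moreover have "edge_pos m j b' \<in> black_moves m n (edge_pos m j b)"
    using assms \<open>b' = b - 1 \<or> b' = b + 1\<close> \<open>j + 2 \<le> b'\<close> \<open>b' \<le> int n\<close>
    by (intro king_move_in_black_moves) (auto simp: on_board_def adj_def rook_attacks_def)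
  ultimately show "p \<in> black_moves m n (edge_pos m j b)" by simp
qed

lemma forced_mate_from_corner:
  assumes "3 \<le> m" and "4 \<le> n"
  shows "forced_mate m n 3 (edge_pos m (int n - 3) (int n))"
proof -
  let ?wk = "(int m - 1, int n - 2)"
  have "(?wk, Some (int m - 2, int n), (int m, int n))
      \<in> white_moves m n (?wk, Some (int m - 2, 1), (int m, int n))"
    using assms by (intro rook_move_in_white_moves rook_attacks_along_column) (auto simp: on_board_def)
  then have mate_in_1: "forced_mate m n 1 (?wk, Some (int m - 2, 1), (int m, int n))"
    unfolding One_nat_def using mated_in_corner[OF assms(2)] by (rule forced_mate_Suc_mateI)
  have "(?wk, Some (int m - 2, 1), (int m - 1, int n))
      \<in> white_moves m n (?wk, Some (int m - 1, 1), (int m - 1, int n))"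
    using assms by (intro rook_move_in_white_moves rook_attacks_along_row) (auto simp: on_board_def)
  then have mate_in_2: "forced_mate m n 2 (?wk, Some (int m - 1, 1), (int m - 1, int n))"
    unfolding numeral_2_eq_2
    by (rule forced_mate_SucI) (use assms mate_in_1 in \<open>simp_all add: black_moves_corner_return\<close>)
  have "(?wk, Some (int m - 1, 1), (int m, int n)) \<in> white_moves m n (edge_pos m (int n - 3) (int n))"
    using assms by (intro king_move_in_white_moves) (auto simp: on_board_def adj_def)
  then show ?thesis
    unfolding numeral_3_eq_3
    by (rule forced_mate_SucI)
      (use assms mate_in_2[unfolded numeral_2_eq_2] in \<open>simp_all add: black_moves_corner_approach\<close>)
qed

lemma forced_mate_edge_pos:
  assumes "3 \<le> m" and "4 \<le> n"
  shows "j + int k + 3 = int n \<Longrightarrow> 1 \<le> j \<Longrightarrow> j + 3 \<le> b \<Longrightarrow> b \<le> int n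
    \<Longrightarrow> odd (b - j) \<Longrightarrow> forced_mate m n (k + 3) (edge_pos m j b)"
proof (induction k arbitrary: j b)
  case 0
  then have "j = int n - 3" and "b = int n" by auto
  with forced_mate_from_corner[OF assms] show ?case by simp
next
  case (Suc k)
  have move: "edge_pos m (j + 1) b \<in> white_moves m n (edge_pos m j b)"
    using assms Suc.prems by (intro king_move_in_white_moves) (auto simp: on_board_def adj_def)
  have replies: "black_moves m n (edge_pos m (j + 1) b)
    = {edge_pos m (j + 1) b' | b'. (b' = b - 1 \<or> b' = b + 1) \<and> j + 1 + 2 \<le> b' \<and> b' \<le> int n}"
    by (rule black_moves_edge_pos) (use assms Suc.prems in auto)
  show ?case
    unfolding add_Suc
  proof (rule forced_mate_SucI[OF move])
    have "edge_pos m (j + 1) (if b < int n then b + 1 else b - 1) \<in> black_moves m n (edge_pos m (j + 1) b)"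
      unfolding replies using Suc.prems by auto
    then show "black_moves m n (edge_pos m (j + 1) b) \<noteq> {}" by blast
  next
    fix p assume "p \<in> black_moves m n (edge_pos m (j + 1) b)"
    then obtain b' where p: "p = edge_pos m (j + 1) b'"
      and "b' = b - 1 \<or> b' = b + 1" and "j + 1 + 2 \<le> b'" and "b' \<le> int n"
      unfolding replies by blast
    have "odd (b' - (j + 1))"
      using \<open>odd (b - j)\<close> \<open>b' = b - 1 \<or> b' = b + 1\<close> by auto
    with \<open>j + 1 + 2 \<le> b'\<close> \<open>b' \<le> int n\<close> Suc.prems
    have "forced_mate m n (k + 3) (edge_pos m (j + 1) b')"
      by (intro Suc.IH) presburger+
    with p show "forced_mate m n (k + 3) p" by simp
  qed
qed

theorem lemma1:
  fixes m n :: nat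
  assumes "m \<ge> 4" and "n \<ge> 5" and "odd n"
  shows "forced_mate m n n ((int m, 1), Some (1, 1), (int m, int n))"
proof -
  have move: "edge_pos m 1 (int n) \<in> white_moves m n ((int m, 1), Some (1, 1), (int m, int n))"
    using assms by (intro rook_move_in_white_moves) (auto simp: on_board_def rook_attacks_def strictly_between_def)
  have replies: "black_moves m n (edge_pos m 1 (int n)) = {edge_pos m 1 (int n - 1)}"
    by (subst black_moves_edge_pos) (use assms in auto)
  have "forced_mate m n (n - 4 + 3) (edge_pos m 1 (int n - 1))"
    using assms by (intro forced_mate_edge_pos) auto
  then have "forced_mate m n (Suc (n - 4 + 3)) ((int m, 1), Some (1, 1), (int m, int n))"
    by (intro forced_mate_SucI[OF move]) (simp_all add: replies)
  moreover have "Suc (n - 4 + 3) = n" using assms by simp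
  ultimately show ?thesis by simp
qed

end
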